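(* Consider the slotted transmission system and transmission policy $P$ described in the context, with loss probability $p\in(0,1)$, feedback delay $d\ge0$ and threshold $\gamma>0$. Suppose that $|\hat{Q}^r_k-Q^r_k|\le\delta$ for all $k$ and some $\delta\ge0$, and that there is $\epsilon>0$ with $E[S_k\mid\hat{Q}^r_k]\ge\epsilon$ whenever $\hat{Q}^r_k\le\gamma$. Let $\hat{S}_k:=1-C_k$ (so $S_k\le\hat{S}_k$) and $\hat{s}_k:=\frac1k\sum_{i=1}^k\hat{S}_i$. Then, as $k\to\infty$, $$E[\hat{s}_k]\ge(1-p)-\frac{\tfrac12+\delta+(1+\delta)(1-p)}{\gamma}.$$
   Context: Time is slotted, slots $k=1,2,\dots$; each slot carries at most one packet transmission over a lossy path. Information packets arrive at the transmitter according to $A_k\in\{0,1\}$ and are held in a transmitter queue $Q^t_{k+1}=[Q^t_k+A_k-S_k]^+$, $Q^t_1=0$, where $[x]^+=\max\{x,0\}$. In slot $k$, $S_k\in\{0,1\}$ indicates that an information packet is sent and $C_k\in\{0,1\}$ indicates that a coded packet is sent ($S_k+C_k\le1$). Erasures: $X_k=1$ if the packet sent in slot $k$ is erased and $0$ otherwise; $\{X_k\}$ is i.i.d. with $\Pr(X_k=1)=p$, independent of the transmitter's decisions and queue state up to slot $k$. The virtual receiver queue evolves as $Q^r_{k+1}=[Q^r_k+S_kX_k-C_k(1-X_k)]^+$ (non-negative integer valued). Feedback reaches the transmitter with delay $d$ slots, so in slot $k$ the transmitter knows $Q^r_{k-d}$ (quantities with non-positive indices are given initial values). The estimator is $\hat{Q}^r_k=Q^r_{k-d}+\sum_{j=k-d}^{k-1}(S_jp-C_j(1-p))$.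 Transmission policy $P$ with parameter $\gamma$: $C_k\in\arg\min_{C\in\{0,1\}}(-\hat{Q}^r_k+\gamma)C$ and $S_k=\min\{Q^t_k+A_k,\,1-C_k\}$. Expectations are over the arrival and loss processes. *)

theory Defs
  imports "HOL-Probability.Probability"
begin

text \<open>Time slots are indexed by integers; slots k \<ge> 1 are the operating slots,
  slots k \<le> 0 (and Q^r_1) carry given deterministic initial values.\<close>

definition Qhat :: "nat \<Rightarrow> real \<Rightarrow> (int \<Rightarrow> 'a \<Rightarrow> nat) \<Rightarrow> (int \<Rightarrow> 'a \<Rightarrow> nat)
    \<Rightarrow> (int \<Rightarrow> 'a \<Rightarrow> nat) \<Rightarrow> int \<Rightarrow> 'a \<Rightarrow> real" where
  "Qhat d p Qr S C k \<omega> =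
     real (Qr (k - int d) \<omega>) +
     (\<Sum>j\<in>{k - int d..k - 1}. real (S j \<omega>) * p - real (C j \<omega>) * (1 - p))"

text \<open>The information available up to slot k: decisions and queue states in slots j \<le> k
  and losses in slots j < k (sigma-algebra generated by them, as a set of events).\<close>
definition hist_events :: "'a measure \<Rightarrow> (int \<Rightarrow> 'a \<Rightarrow> nat) \<Rightarrow> (int \<Rightarrow> 'a \<Rightarrow> nat)
    \<Rightarrow> (int \<Rightarrow> 'a \<Rightarrow> nat) \<Rightarrow> (int \<Rightarrow> 'a \<Rightarrow> nat) \<Rightarrow> (int \<Rightarrow> 'a \<Rightarrow> nat) \<Rightarrow> int \<Rightarrow> 'a set set" where
  "hist_events M S C Qt Qr X k =
     sigma_sets (space M)
       ((\<Union>j\<in>{..k}. \<Union>V\<in>{S j, C j, Qt j, Qr j}. {V -` B \<inter> space M | B. True})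
        \<union> (\<Union>j\<in>{..<k}. {X j -` B \<inter> space M | B. True}))"

definition gen_alg :: "'a measure \<Rightarrow> ('a \<Rightarrow> real) \<Rightarrow> 'a measure" where
  "gen_alg M Y = vimage_algebra (space M) Y borel"

end

theory Submission
  imports Defs
begin

(* Only a coded packet that gets through shrinks the receiver queue, and an erased information
   packet grows it.  If delta < gamma, a coded packet is sent only when the estimate reaches
   gamma, i.e. when Q^r_k >= gamma - delta > 0, so the truncation [.]^+ never acts and
   Q^r_(k+1) = Q^r_k + S_k X_k - C_k (1 - X_k).  Since X_k is independent of S_k and C_k and
   S_k <= 1 - C_k, the expected increment is p E S_k - (1-p) E C_k <= p - E C_k.  Summing and
   using Q^r >= 0 gives sum_(i<=k) E C_i <= k p + Q^r_1, hence E s_k >= 1 - p - Q^r_1 / k, so the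
   liminf is at least 1 - p, which dominates the claimed bound.  If gamma <= delta the claimed bound is nonpositive. *)

lemma liminf_ge_of_ge_sub_const_over_n:
  fixes f :: "nat \<Rightarrow> real"
  assumes "\<And>k. k \<ge> 1 \<Longrightarrow> a - c / real k \<le> f k"
  shows "ereal a \<le> liminf (\<lambda>k. ereal (f k))"
proof -
  have "(\<lambda>k. a - c / real k) \<longlonglongrightarrow> a - 0"
    by (intro tendsto_intros lim_const_over_n)
  then have "ereal a = liminf (\<lambda>k. ereal (a - c / real k))"
    by (intro lim_imp_Liminf[symmetric]) auto
  also have "\<dots> \<le> liminf (\<lambda>k. ereal (f k))"
    using assms by (intro Liminf_mono eventually_sequentiallyI[of 1]) auto
  finally show ?thesis .
qed

lemma (in prob_space) expectation_01_eq_prob: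
  fixes f :: "'a \<Rightarrow> nat"
  assumes "\<And>\<omega>. \<omega> \<in> space M \<Longrightarrow> f \<omega> \<in> {0, 1}"
  shows "expectation (\<lambda>\<omega>. real (f \<omega>)) = prob {\<omega> \<in> space M. f \<omega> = 1}"
proof -
  have "expectation (\<lambda>\<omega>. real (f \<omega>)) = expectation (indicator {\<omega> \<in> space M. f \<omega> = 1})"
    using assms by (intro Bochner_Integration.integral_cong) (auto simp: indicator_def)
  then show ?thesis
    by (simp add: Int_absorb2)
qed

lemma (in prob_space) expectation_mult_01_indep:
  fixes f g :: "'a \<Rightarrow> nat"
  assumes f01: "\<And>\<omega>. \<omega> \<in> space M \<Longrightarrow> f \<omega> \<in> {0, 1}"
    and g01: "\<And>\<omega>. \<omega> \<in> space M \<Longrightarrow> g \<omega> \<in> {0, 1}"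
    and indep: "prob ({\<omega> \<in> space M. f \<omega> = 1} \<inter> {\<omega> \<in> space M. g \<omega> = 1})
      = prob {\<omega> \<in> space M. f \<omega> = 1} * prob {\<omega> \<in> space M. g \<omega> = 1}"
  shows "expectation (\<lambda>\<omega>. real (f \<omega>) * real (g \<omega>))
    = expectation (\<lambda>\<omega>. real (f \<omega>)) * expectation (\<lambda>\<omega>. real (g \<omega>))"
proof -
  have "{\<omega> \<in> space M. f \<omega> * g \<omega> = 1} = {\<omega> \<in> space M. f \<omega> = 1} \<inter> {\<omega> \<in> space M. g \<omega> = 1}"
    by auto
  moreover have "expectation (\<lambda>\<omega>. real (f \<omega> * g \<omega>)) = prob {\<omega> \<in> space M. f \<omega> * g \<omega> = 1}"
    using f01 g01 by (intro expectation_01_eq_prob) fastforce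
  ultimately show ?thesis
    using indep f01 g01 by (simp add: expectation_01_eq_prob)
qed

lemma (in prob_space) indep_hist_events_prob_Int:
  assumes indep: "indep_set (sigma_sets (space M) {X k -` B \<inter> space M | B. True})
      (hist_events M S C Qt Qr X k)"
    and V: "V \<in> {S k, C k, Qt k, Qr k}"
  shows "prob ({\<omega> \<in> space M. V \<omega> = b} \<inter> {\<omega> \<in> space M. X k \<omega> = c})
    = prob {\<omega> \<in> space M. V \<omega> = b} * prob {\<omega> \<in> space M. X k \<omega> = c}"
proof -
  have "{\<omega> \<in> space M. X k \<omega> = c} = X k -` {c} \<inter> space M"
    by auto
  then have X_event:
    "{\<omega> \<in> space M. X k \<omega> = c} \<in> sigma_sets (space M) {X k -` B \<inter> space M | B. True}"
    by (auto intro: sigma_sets.Basic)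
  have "{\<omega> \<in> space M. V \<omega> = b} = V -` {b} \<inter> space M"
    by auto
  then have V_event: "{\<omega> \<in> space M. V \<omega> = b} \<in> hist_events M S C Qt Qr X k"
    unfolding hist_events_def using V by (intro sigma_sets.Basic) blast
  show ?thesis
    using indep_setD[OF indep X_event V_event] by (simp add: Int_commute mult.commute)
qed

lemma (in prob_space) integrable_real_nat_bounded:
  fixes f :: "'a \<Rightarrow> nat"
  assumes "f \<in> measurable M (count_space UNIV)" "\<And>\<omega>. \<omega> \<in> space M \<Longrightarrow> f \<omega> \<le> b"
  shows "integrable M (\<lambda>\<omega>. real (f \<omega>))"
  using assms by (intro integrable_const_bound[where B = b] AE_I2) auto

locale erasure_queue = prob_space M for M :: "'a measure" +
  fixes p :: real and X S C Qr :: "int \<Rightarrow> 'a \<Rightarrow> nat"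
  assumes X_measurable[measurable]: "\<And>i. X i \<in> measurable M (count_space UNIV)"
    and S_measurable[measurable]: "\<And>i. S i \<in> measurable M (count_space UNIV)"
    and C_measurable[measurable]: "\<And>i. C i \<in> measurable M (count_space UNIV)"
    and X_01: "\<And>i \<omega>. i \<ge> 1 \<Longrightarrow> \<omega> \<in> space M \<Longrightarrow> X i \<omega> \<in> {0, 1}"
    and C_01: "\<And>i \<omega>. i \<ge> 1 \<Longrightarrow> \<omega> \<in> space M \<Longrightarrow> C i \<omega> \<in> {0, 1}"
    and S_add_C_le_1: "\<And>i \<omega>. i \<ge> 1 \<Longrightarrow> \<omega> \<in> space M \<Longrightarrow> S i \<omega> + C i \<omega> \<le> 1"
    and prob_erasure: "\<And>i. i \<ge> 1 \<Longrightarrow> prob {\<omega> \<in> space M. X i \<omega> = 1} = p"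
    and erasure_indep: "\<And>i V. i \<ge> 1 \<Longrightarrow> V \<in> {S i, C i} \<Longrightarrow>
      prob ({\<omega> \<in> space M. V \<omega> = 1} \<inter> {\<omega> \<in> space M. X i \<omega> = 1})
        = prob {\<omega> \<in> space M. V \<omega> = 1} * prob {\<omega> \<in> space M. X i \<omega> = 1}"
    and Qr_step: "\<And>i \<omega>. i \<ge> 1 \<Longrightarrow> \<omega> \<in> space M \<Longrightarrow>
      Qr (i + 1) \<omega> = nat (int (Qr i \<omega>) + int (S i \<omega> * X i \<omega>) - int (C i \<omega> * (1 - X i \<omega>)))"
    and coded_imp_backlog:
      "\<And>i \<omega>. i \<ge> 1 \<Longrightarrow> \<omega> \<in> space M \<Longrightarrow> C i \<omega> = 1 \<Longrightarrow> Qr i \<omega> \<ge> 1"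
begin

definition drift :: "int \<Rightarrow> 'a \<Rightarrow> real" where
  "drift i \<omega> = real (S i \<omega>) * real (X i \<omega>) - real (C i \<omega>) * (1 - real (X i \<omega>))"

lemma Qr_step_real:
  assumes "i \<ge> 1" "\<omega> \<in> space M"
  shows "real (Qr (i + 1) \<omega>) = real (Qr i \<omega>) + drift i \<omega>"
  using Qr_step[OF assms] coded_imp_backlog[OF assms] C_01[OF assms] X_01[OF assms]
    S_add_C_le_1[OF assms]
  by (auto simp: drift_def)

lemma Qr_telescope:
  assumes "\<omega> \<in> space M"
  shows "real (Qr (1 + int k) \<omega>) = real (Qr 1 \<omega>) + (\<Sum>i\<in>{1..int k}. drift i \<omega>)"
proof (induction k)
  case (Suc k)
  have "{1..int (Suc k)} = insert (1 + int k) {1..int k}"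
    by auto
  moreover have "real (Qr (1 + int (Suc k)) \<omega>) = real (Qr (1 + int k) \<omega>) + drift (1 + int k) \<omega>"
    using Qr_step_real[OF _ assms, of "1 + int k"] by (simp add: add.commute)
  ultimately show ?case
    using Suc.IH by simp
qed simp

lemma integrable_mult_X:
  assumes "i \<ge> 1" "V \<in> {S i, C i}"
  shows "integrable M (\<lambda>\<omega>. real (V \<omega>) * real (X i \<omega>))"
proof -
  have "(\<lambda>\<omega>. V \<omega> * X i \<omega>) \<in> measurable M (count_space UNIV)"
    using assms(2) by auto
  then show ?thesis
    using assms C_01 X_01 S_add_C_le_1
    unfolding of_nat_mult[symmetric] by (intro integrable_real_nat_bounded[where b = 1]) fastforce+
qed

lemma integrable_C: "i \<ge> 1 \<Longrightarrow> integrable M (\<lambda>\<omega>. real (C i \<omega>))"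
  using C_01 by (intro integrable_real_nat_bounded[where b = 1]) fastforce+

lemma integrable_S: "i \<ge> 1 \<Longrightarrow> integrable M (\<lambda>\<omega>. real (S i \<omega>))"
  using S_add_C_le_1 by (intro integrable_real_nat_bounded[where b = 1]) fastforce+

lemma integrable_drift: "i \<ge> 1 \<Longrightarrow> integrable M (drift i)"
  using integrable_mult_X[of i] integrable_C[of i]
  by (auto simp: drift_def[abs_def] algebra_simps)

lemma expectation_X: "i \<ge> 1 \<Longrightarrow> expectation (\<lambda>\<omega>. real (X i \<omega>)) = p"
  using X_01 prob_erasure by (simp add: expectation_01_eq_prob)

lemma expectation_mult_X:
  assumes "i \<ge> 1" "V \<in> {S i, C i}"
  shows "expectation (\<lambda>\<omega>. real (V \<omega>) * real (X i \<omega>)) = p * expectation (\<lambda>\<omega>. real (V \<omega>))"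
proof -
  have "\<omega> \<in> space M \<Longrightarrow> V \<omega> \<in> {0, 1}" for \<omega>
    using assms C_01[OF assms(1)] S_add_C_le_1[OF assms(1)] by fastforce
  then show ?thesis
    using X_01[OF assms(1)] erasure_indep[OF assms] expectation_X[OF assms(1)]
    by (simp add: expectation_mult_01_indep)
qed

lemma expectation_drift_le:
  assumes "i \<ge> 1"
  shows "expectation (drift i) \<le> p - expectation (\<lambda>\<omega>. real (C i \<omega>))"
proof -
  have "0 \<le> p"
    by (metis measure_nonneg order_refl prob_erasure)
  have "expectation (\<lambda>\<omega>. real (S i \<omega>)) \<le> expectation (\<lambda>\<omega>. 1 - real (C i \<omega>))"
    using S_add_C_le_1[OF assms] integrable_S[OF assms] integrable_C[OF assms]
    by (intro integral_mono) force+
  also have "\<dots> = 1 - expectation (\<lambda>\<omega>. real (C i \<omega>))"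
    using integrable_C[OF assms] prob_space by simp
  finally have "p * expectation (\<lambda>\<omega>. real (S i \<omega>)) \<le> p * (1 - expectation (\<lambda>\<omega>. real (C i \<omega>)))"
    using \<open>0 \<le> p\<close> by (rule mult_left_mono)
  moreover have "drift i = (\<lambda>\<omega>. real (S i \<omega>) * real (X i \<omega>) - real (C i \<omega>)
      + real (C i \<omega>) * real (X i \<omega>))"
    by (auto simp: drift_def algebra_simps)
  then have "expectation (drift i) = expectation (\<lambda>\<omega>. real (S i \<omega>) * real (X i \<omega>))
      - expectation (\<lambda>\<omega>. real (C i \<omega>)) + expectation (\<lambda>\<omega>. real (C i \<omega>) * real (X i \<omega>))"
    using integrable_mult_X[OF assms, of "S i"] integrable_mult_X[OF assms, of "C i"]
      integrable_C[OF assms]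
    by simp
  then have "expectation (drift i)
      = p * expectation (\<lambda>\<omega>. real (S i \<omega>)) - (1 - p) * expectation (\<lambda>\<omega>. real (C i \<omega>))"
    using expectation_mult_X[OF assms, of "S i"] expectation_mult_X[OF assms, of "C i"]
    by (simp add: algebra_simps)
  ultimately show ?thesis
    by (simp add: algebra_simps)
qed

lemma sum_expectation_C_le:
  assumes "\<And>\<omega>. \<omega> \<in> space M \<Longrightarrow> Qr 1 \<omega> \<le> q"
  shows "(\<Sum>i\<in>{1..int k}. expectation (\<lambda>\<omega>. real (C i \<omega>))) \<le> real k * p + real q"
proof -
  have "- real q \<le> (\<Sum>i\<in>{1..int k}. drift i \<omega>)" if "\<omega> \<in> space M" for \<omega>
    using Qr_telescope[OF that, of k] assms[OF that] of_nat_0_le_iff[of "Qr (1 + int k) \<omega>"]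
    by linarith
  then have "expectation (\<lambda>_. - real q) \<le> expectation (\<lambda>\<omega>. \<Sum>i\<in>{1..int k}. drift i \<omega>)"
    using integrable_drift by (intro integral_mono) auto
  also have "\<dots> = (\<Sum>i\<in>{1..int k}. expectation (drift i))"
    using integrable_drift by (intro Bochner_Integration.integral_sum) auto
  also have "\<dots> \<le> (\<Sum>i\<in>{1..int k}. p - expectation (\<lambda>\<omega>. real (C i \<omega>)))"
    using expectation_drift_le by (intro sum_mono) auto
  also have "\<dots> = real k * p - (\<Sum>i\<in>{1..int k}. expectation (\<lambda>\<omega>. real (C i \<omega>)))"
    by (simp add: sum_subtractf)
  finally show ?thesis
    using prob_space by simp
qed

lemma expected_uncoded_fraction_ge:
  assumes "\<And>\<omega>. \<omega> \<in> space M \<Longrightarrow> Qr 1 \<omega> \<le> q" and "k \<ge> 1"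
  shows "1 - p - real q / real k
    \<le> expectation (\<lambda>\<omega>. (\<Sum>i\<in>{1..int k}. 1 - real (C i \<omega>)) / real k)"
proof -
  have "expectation (\<lambda>\<omega>. \<Sum>i\<in>{1..int k}. 1 - real (C i \<omega>))
      = (\<Sum>i\<in>{1..int k}. 1 - expectation (\<lambda>\<omega>. real (C i \<omega>)))"
    using integrable_C prob_space
    by (subst Bochner_Integration.integral_sum) (auto simp: integral_diff)
  also have "\<dots> = real k - (\<Sum>i\<in>{1..int k}. expectation (\<lambda>\<omega>. real (C i \<omega>)))"
    by (simp add: sum_subtractf)
  also have "\<dots> \<ge> real k - (real k * p + real q)"
    using sum_expectation_C_le[OF assms(1), of k] by simp
  finally have "(real k - (real k * p + real q)) / real k
      \<le> expectation (\<lambda>\<omega>. (\<Sum>i\<in>{1..int k}. 1 - real (C i \<omega>)) / real k)"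
    by (simp add: divide_right_mono)
  then show ?thesis
    using assms(2) by (simp add: diff_divide_distrib add_divide_distrib)
qed

lemma liminf_expected_uncoded_fraction_ge:
  assumes "\<And>\<omega>. \<omega> \<in> space M \<Longrightarrow> Qr 1 \<omega> \<le> q"
  shows "ereal (1 - p) \<le> liminf (\<lambda>k::nat. ereal (expectation
    (\<lambda>\<omega>. (\<Sum>i\<in>{1..int k}. 1 - real (C i \<omega>)) / real k)))"
  using expected_uncoded_fraction_ge[OF assms] by (intro liminf_ge_of_ge_sub_const_over_n)

end

lemma coded_imp_backlog_of_threshold:
  fixes qhat \<gamma> \<delta> :: real and c q :: nat
  assumes "\<forall>c'\<in>{0::nat, 1}. (- qhat + \<gamma>) * real c \<le> (- qhat + \<gamma>) * real c'"
    and "\<bar>qhat - real q\<bar> \<le> \<delta>" "\<delta> < \<gamma>" "c = 1"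
  shows "1 \<le> q"
proof -
  have "\<gamma> \<le> qhat"
    using assms(1,4) by force
  then have "0 < real q"
    using assms(2,3) by linarith
  then show ?thesis
    by simp
qed

theorem theorem2:
  fixes M :: "'a measure"
    and A X S C Qt Qr :: "int \<Rightarrow> 'a \<Rightarrow> nat"
    and p \<gamma> \<delta> :: real and d :: nat
    and s0 c0 r0 :: "int \<Rightarrow> nat"
  assumes "prob_space M"
    and p: "0 < p" "p < 1" and gam: "\<gamma> > 0" and del: "\<delta> \<ge> 0"
    and meas: "\<And>k. A k \<in> measurable M (count_space UNIV)"
      "\<And>k. X k \<in> measurable M (count_space UNIV)"
      "\<And>k. S k \<in> measurable M (count_space UNIV)"
      "\<And>k. C k \<in> measurable M (count_space UNIV)"
      "\<And>k. Qt k \<in> measurable M (count_space UNIV)"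
      "\<And>k. Qr k \<in> measurable M (count_space UNIV)"
    \<comment> \<open>given deterministic initial values\<close>
    and init: "\<And>k \<omega>. k \<le> 0 \<Longrightarrow> \<omega> \<in> space M \<Longrightarrow> S k \<omega> = s0 k \<and> C k \<omega> = c0 k"
      "\<And>k \<omega>. k \<le> 1 \<Longrightarrow> \<omega> \<in> space M \<Longrightarrow> Qr k \<omega> = r0 k"
      "\<And>\<omega>. \<omega> \<in> space M \<Longrightarrow> Qt 1 \<omega> = 0"
    \<comment> \<open>arrivals and erasures are 0/1 valued\<close>
    and AX01: "\<And>k \<omega>. k \<ge> 1 \<Longrightarrow> \<omega> \<in> space M \<Longrightarrow> A k \<omega> \<in> {0, 1} \<and> X k \<omega> \<in> {0, 1}"
    \<comment> \<open>erasures: Bernoulli(p), independent of the past losses, decisions and queue states up to slot k\<close>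
    and Xdist: "\<And>k. k \<ge> 1 \<Longrightarrow> prob_space.prob M {\<omega> \<in> space M. X k \<omega> = 1} = p"
    and Xindep: "\<And>k. k \<ge> 1 \<Longrightarrow> prob_space.indep_set M
        (sigma_sets (space M) {X k -` B \<inter> space M | B. True}) (hist_events M S C Qt Qr X k)"
    \<comment> \<open>queue dynamics\<close>
    and Qt_step: "\<And>k \<omega>. k \<ge> 1 \<Longrightarrow> \<omega> \<in> space M \<Longrightarrow> Qt (k + 1) \<omega> = (Qt k \<omega> + A k \<omega>) - S k \<omega>"
    and Qr_step: "\<And>k \<omega>. k \<ge> 1 \<Longrightarrow> \<omega> \<in> space M \<Longrightarrow>
        Qr (k + 1) \<omega> = nat (int (Qr k \<omega>) + int (S k \<omega> * X k \<omega>) - int (C k \<omega> * (1 - X k \<omega>)))"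
    \<comment> \<open>policy P with parameter gamma\<close>
    and C_pol: "\<And>k \<omega>. k \<ge> 1 \<Longrightarrow> \<omega> \<in> space M \<Longrightarrow> C k \<omega> \<in> {0, 1} \<and>
        (\<forall>c\<in>{0::nat, 1}. (- Qhat d p Qr S C k \<omega> + \<gamma>) * real (C k \<omega>) \<le> (- Qhat d p Qr S C k \<omega> + \<gamma>) * real c)"
    and S_pol: "\<And>k \<omega>. k \<ge> 1 \<Longrightarrow> \<omega> \<in> space M \<Longrightarrow> S k \<omega> = min (Qt k \<omega> + A k \<omega>) (1 - C k \<omega>)"
    \<comment> \<open>hypotheses of the theorem\<close>
    and est: "\<And>k \<omega>. k \<ge> 1 \<Longrightarrow> \<omega> \<in> space M \<Longrightarrow> \<bar>Qhat d p Qr S C k \<omega> - real (Qr k \<omega>)\<bar> \<le> \<delta>"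
    and eps: "\<exists>\<epsilon>>0. \<forall>k\<ge>1. AE \<omega> in M. Qhat d p Qr S C k \<omega> \<le> \<gamma> \<longrightarrow>
        real_cond_exp M (gen_alg M (Qhat d p Qr S C k)) (\<lambda>\<omega>. real (S k \<omega>)) \<omega> \<ge> \<epsilon>"
  shows "liminf (\<lambda>k::nat. ereal (prob_space.expectation M
            (\<lambda>\<omega>. (\<Sum>i\<in>{1..int k}. 1 - real (C i \<omega>)) / real k)))
         \<ge> ereal ((1 - p) - (1/2 + \<delta> + (1 + \<delta>) * (1 - p)) / \<gamma>)"
proof -
  interpret prob_space M by fact
  show ?thesis
  proof (cases "\<gamma> \<le> \<delta>")
    case True
    have "0 \<le> (1 + \<delta>) * (1 - p)"
      using del p by simp
    then have "1 \<le> (1/2 + \<delta> + (1 + \<delta>) * (1 - p)) / \<gamma>"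
      using True gam by (simp add: le_divide_eq)
    then have bound_nonpos: "(1 - p) - (1/2 + \<delta> + (1 + \<delta>) * (1 - p)) / \<gamma> \<le> 0"
      using p by simp
    have "0 \<le> expectation (\<lambda>\<omega>. (\<Sum>i\<in>{1..int k}. 1 - real (C i \<omega>)) / real k)" for k
      using C_pol
      by (intro Bochner_Integration.integral_nonneg divide_nonneg_nonneg sum_nonneg) force+
    then show ?thesis
      by (intro Liminf_bounded always_eventually allI, unfold ereal_less_eq(3))
        (rule order_trans[OF bound_nonpos])
  next
    case False
    interpret erasure_queue M p X S C Qr
    proof
      show "S i \<omega> + C i \<omega> \<le> 1" if "i \<ge> 1" "\<omega> \<in> space M" for i \<omega>
        using S_pol[OF that] C_pol[OF that] by auto
      show "1 \<le> Qr i \<omega>" if "i \<ge> 1" "\<omega> \<in> space M" "C i \<omega> = 1" for i \<omega>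
        using C_pol[OF that(1,2)] est[OF that(1,2)] False that(3)
        by (intro coded_imp_backlog_of_threshold) auto
      show "prob ({\<omega> \<in> space M. V \<omega> = 1} \<inter> {\<omega> \<in> space M. X i \<omega> = 1})
        = prob {\<omega> \<in> space M. V \<omega> = 1} * prob {\<omega> \<in> space M. X i \<omega> = 1}"
        if "i \<ge> 1" "V \<in> {S i, C i}" for i V
        using indep_hist_events_prob_Int[OF Xindep[OF that(1)]] that(2) by auto
    qed (use meas AX01 C_pol Xdist Qr_step in auto)
    have "(1 - p) - (1/2 + \<delta> + (1 + \<delta>) * (1 - p)) / \<gamma> \<le> 1 - p"
      using gam del p by simp
    also have "ereal (1 - p) \<le> liminf (\<lambda>k::nat. ereal (expectation
        (\<lambda>\<omega>. (\<Sum>i\<in>{1..int k}. 1 - real (C i \<omega>)) / real k)))"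
      using init(2)[of 1] by (intro liminf_expected_uncoded_fraction_ge[of "r0 1"]) auto
    finally show ?thesis
      by simp
  qed
qed

end
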